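(* Let $G=(V,E)$ be a connected almost bipartite permutation graph that contains a hole, let $C$ be a shortest hole, $m=|C|$, $c_0,\dots,c_{m-1}$ its vertices in cyclic order (indices modulo $m$), and for each $i$ let $A_i=\{v\in V: N(v)\cap C=\{c_{i-1},c_{i+1}\}\}$ and $B_i=\{v\in V: N(v)\cap C=\{c_i\}\}$ (indices modulo $m$). For $i\in\{0,\dots,m-1\}$ define the relation $<_{A_i}$ on $A_i$ by: $u<_{A_i}u'$ iff there is $w\in B_{i-2}\cup A_{i-1}$ with $u\in N(w)$ and $u'\notin N(w)$, or there is $w\in A_{i+1}\cup B_{i+2}$ with $u'\in N(w)$ and $u\notin N(w)$. Define $<_{B_i}$ on $B_i$ by: $w<_{B_i}w'$ iff there is $u\in A_{i-2}\cup B_{i-1}$ with $w\in N(u)$ and $w'\notin N(u)$, or there is $u\in B_{i+1}\cup A_{i+2}$ with $w'\in N(u)$ and $w\notin N(u)$. Then for every $i\in\{0,\dots,m-1\}$: (1) $(A_i,<_{A_i})$ is a strict partial order, and $u,u'\in A_i$ are incomparable in it if and only if $N(u)=N(u')$; (2) $(B_i,<_{B_i})$ is a strict partial order, and $w,w'\in B_i$ are incomparable in it if and only if $N(w)=N(w')$.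
   Context: All graphs are finite, simple, undirected; $N(v)$ is the open neighborhood of $v$. A hole is an induced cycle on at least five vertices. $K_3$ is the triangle, $C_k$ the cycle on $k$ vertices. $T_2$ is the tree on 7 vertices obtained from the claw $K_{1,3}$ by subdividing each edge once. $X_2$ is the 7-vertex graph obtained from a 4-cycle by attaching one new pendant vertex to each of three of its four vertices. $X_3$ is the 7-vertex graph obtained from the domino (two 4-cycles sharing exactly one edge) by attaching one new pendant vertex to one endpoint of the shared edge. A graph is an almost bipartite permutation graph if it contains none of $T_2, X_2, X_3, K_3, C_5,\dots,C_9$ as an induced subgraph. A strict partial order is an irreflexive transitive relation. *)

theory Defs
  imports Main
begin

definition simple_graph :: "'a set \<Rightarrow> ('a \<Rightarrow> 'a \<Rightarrow> bool) \<Rightarrow> bool" where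
  "simple_graph V E \<longleftrightarrow> finite V \<and> (\<forall>x y. E x y \<longrightarrow> x \<in> V \<and> y \<in> V)
     \<and> (\<forall>x y. E x y \<longrightarrow> E y x) \<and> (\<forall>x. \<not> E x x)"

definition connected_graph :: "'a set \<Rightarrow> ('a \<Rightarrow> 'a \<Rightarrow> bool) \<Rightarrow> bool" where
  "connected_graph V E \<longleftrightarrow> V \<noteq> {} \<and> (\<forall>x\<in>V. \<forall>y\<in>V. E\<^sup>*\<^sup>* x y)"

definition nbhd :: "('a \<Rightarrow> 'a \<Rightarrow> bool) \<Rightarrow> 'a \<Rightarrow> 'a set" where
  "nbhd E v = {u. E v u}"

definition has_induced :: "'a set \<Rightarrow> ('a \<Rightarrow> 'a \<Rightarrow> bool) \<Rightarrow> nat \<Rightarrow> (nat \<Rightarrow> nat \<Rightarrow> bool) \<Rightarrow> bool" where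
  "has_induced V E n H \<longleftrightarrow> (\<exists>f. inj_on f {0..<n} \<and> f ` {0..<n} \<subseteq> V \<and>
      (\<forall>i<n. \<forall>j<n. E (f i) (f j) \<longleftrightarrow> H i j))"

definition edges_of :: "(nat \<times> nat) list \<Rightarrow> nat \<Rightarrow> nat \<Rightarrow> bool" where
  "edges_of es i j \<longleftrightarrow> (i, j) \<in> set es \<or> (j, i) \<in> set es"

definition cycle_graph :: "nat \<Rightarrow> nat \<Rightarrow> nat \<Rightarrow> bool" where
  "cycle_graph k i j \<longleftrightarrow> i < k \<and> j < k \<and> (j = Suc i mod k \<or> i = Suc j mod k)"

(* T_2: claw with each edge subdivided; centre 0 *)
definition T2 :: "nat \<Rightarrow> nat \<Rightarrow> bool" where
  "T2 = edges_of [(0,1),(1,2),(0,3),(3,4),(0,5),(5,6)]"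

(* X_2: 4-cycle 0-1-2-3-0 with pendants 4,5,6 at 0,1,2 *)
definition X2 :: "nat \<Rightarrow> nat \<Rightarrow> bool" where
  "X2 = edges_of [(0,1),(1,2),(2,3),(3,0),(0,4),(1,5),(2,6)]"

(* X_3: domino (2x3 grid, top row 0,1,2, bottom row 3,4,5, shared edge 1-4)
   with pendant 6 attached to 1 *)
definition X3 :: "nat \<Rightarrow> nat \<Rightarrow> bool" where
  "X3 = edges_of [(0,1),(1,2),(3,4),(4,5),(0,3),(1,4),(2,5),(1,6)]"

definition almost_bip_perm :: "'a set \<Rightarrow> ('a \<Rightarrow> 'a \<Rightarrow> bool) \<Rightarrow> bool" where
  "almost_bip_perm V E \<longleftrightarrow>
     \<not> has_induced V E 7 T2 \<and> \<not> has_induced V E 7 X2 \<and> \<not> has_induced V E 7 X3 \<and>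
     \<not> has_induced V E 3 (cycle_graph 3) \<and>
     (\<forall>k. 5 \<le> k \<and> k \<le> 9 \<longrightarrow> \<not> has_induced V E k (cycle_graph k))"

definition is_hole :: "'a set \<Rightarrow> ('a \<Rightarrow> 'a \<Rightarrow> bool) \<Rightarrow> (nat \<Rightarrow> 'a) \<Rightarrow> nat \<Rightarrow> bool" where
  "is_hole V E c m \<longleftrightarrow> 5 \<le> m \<and> inj_on c {0..<m} \<and> c ` {0..<m} \<subseteq> V \<and>
     (\<forall>i<m. \<forall>j<m. E (c i) (c j) \<longleftrightarrow> cycle_graph m i j)"

definition shortest_hole :: "'a set \<Rightarrow> ('a \<Rightarrow> 'a \<Rightarrow> bool) \<Rightarrow> (nat \<Rightarrow> 'a) \<Rightarrow> nat \<Rightarrow> bool" where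
  "shortest_hole V E c m \<longleftrightarrow> is_hole V E c m \<and>
     (\<forall>(c' :: nat \<Rightarrow> 'a) m'. is_hole V E c' m' \<longrightarrow> m \<le> m')"

definition cyc :: "(nat \<Rightarrow> 'a) \<Rightarrow> nat \<Rightarrow> int \<Rightarrow> 'a" where
  "cyc c m k = c (nat (k mod int m))"

definition Aset :: "'a set \<Rightarrow> ('a \<Rightarrow> 'a \<Rightarrow> bool) \<Rightarrow> (nat \<Rightarrow> 'a) \<Rightarrow> nat \<Rightarrow> int \<Rightarrow> 'a set" where
  "Aset V E c m i = {v \<in> V. nbhd E v \<inter> c ` {0..<m} = {cyc c m (i - 1), cyc c m (i + 1)}}"

definition Bset :: "'a set \<Rightarrow> ('a \<Rightarrow> 'a \<Rightarrow> bool) \<Rightarrow> (nat \<Rightarrow> 'a) \<Rightarrow> nat \<Rightarrow> int \<Rightarrow> 'a set" where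
  "Bset V E c m i = {v \<in> V. nbhd E v \<inter> c ` {0..<m} = {cyc c m i}}"

definition ltA :: "'a set \<Rightarrow> ('a \<Rightarrow> 'a \<Rightarrow> bool) \<Rightarrow> (nat \<Rightarrow> 'a) \<Rightarrow> nat \<Rightarrow> int \<Rightarrow> 'a \<Rightarrow> 'a \<Rightarrow> bool" where
  "ltA V E c m i u u' \<longleftrightarrow>
     (\<exists>w \<in> Bset V E c m (i - 2) \<union> Aset V E c m (i - 1). u \<in> nbhd E w \<and> u' \<notin> nbhd E w) \<or>
     (\<exists>w \<in> Aset V E c m (i + 1) \<union> Bset V E c m (i + 2). u' \<in> nbhd E w \<and> u \<notin> nbhd E w)"

definition ltB :: "'a set \<Rightarrow> ('a \<Rightarrow> 'a \<Rightarrow> bool) \<Rightarrow> (nat \<Rightarrow> 'a) \<Rightarrow> nat \<Rightarrow> int \<Rightarrow> 'a \<Rightarrow> 'a \<Rightarrow> bool" where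
  "ltB V E c m i w w' \<longleftrightarrow>
     (\<exists>u \<in> Aset V E c m (i - 2) \<union> Bset V E c m (i - 1). w \<in> nbhd E u \<and> w' \<notin> nbhd E u) \<or>
     (\<exists>u \<in> Bset V E c m (i + 1) \<union> Aset V E c m (i + 2). w' \<in> nbhd E u \<and> w \<notin> nbhd E u)"

definition strict_po_on :: "'a set \<Rightarrow> ('a \<Rightarrow> 'a \<Rightarrow> bool) \<Rightarrow> bool" where
  "strict_po_on S R \<longleftrightarrow> irreflp_on S R \<and> transp_on S R"

end

theory Submission
  imports Defs
begin

text \<open>A shortest hole \<open>C\<close> has length \<open>m \<ge> 10\<close>, since \<open>C\<^sub>5, ..., C\<^sub>9\<close> are excluded.
A vertex \<open>x\<close> with a neighbour \<open>c\<^sub>p\<close> on \<open>C\<close> has \<open>N(x) \<inter> C\<close> equal to \<open>{c\<^sub>p}\<close>,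
\<open>{c\<^bsub>p-2\<^esub>, c\<^sub>p}\<close> or \<open>{c\<^sub>p, c\<^bsub>p+2\<^esub>}\<close>: walking around \<open>C\<close>, the next neighbour of \<open>x\<close>
after \<open>c\<^sub>p\<close> is at distance 2 or \<open>m - 2\<close> (distance 1 or \<open>m - 1\<close> gives a triangle, any other
distance a shorter hole), and neighbours \<open>c\<^sub>p\<close>, \<open>c\<^bsub>p+4\<^esub>\<close> would make \<open>x\<close> the centre of
an induced \<open>T\<^sub>2\<close>.

Now let \<open>u, u' \<in> A\<^sub>i\<close>. Every vertex adjacent to exactly one of them lies in the left set
\<open>B\<^bsub>i-2\<^esub> \<union> A\<^bsub>i-1\<^esub>\<close> or the right set \<open>A\<^bsub>i+1\<^esub> \<union> B\<^bsub>i+2\<^esub>\<close>, for otherwise there is an induced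
\<open>X\<^sub>2\<close> or a hole shorter than \<open>C\<close>. The traces of the neighbourhoods on the left set form a chain,
and so do those on the right set (an \<open>X\<^sub>2\<close> otherwise), and they vary in opposite directions
(an \<open>X\<^sub>3\<close> otherwise). So comparing left traces downwards and right traces upwards is a total
preorder on \<open>A\<^sub>i\<close>; \<open><\<^bsub>A_i\<^esub>\<close> is its strict part, and its classes consist of vertices with equal
neighbourhoods. The same argument works for \<open>B\<^sub>i\<close>, with \<open>T\<^sub>2\<close> taking the role of \<open>X\<^sub>2\<close>
for the chains.\<close>

section \<open>Induced copies of twin-free patterns\<close>

definition twin_free :: "nat \<Rightarrow> (nat \<Rightarrow> nat \<Rightarrow> bool) \<Rightarrow> bool" where
  "twin_free n H \<longleftrightarrow> (\<forall>i<n. \<forall>j<n. (\<forall>k<n. H i k \<longleftrightarrow> H j k) \<longrightarrow> i = j)"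

lemma inj_on_if_twin_free:
  assumes "twin_free n H" and "\<forall>i<n. \<forall>j<n. E (f i) (f j) \<longleftrightarrow> H i j"
  shows "inj_on f {0..<n}"
proof (rule inj_onI)
  fix i j assume "i \<in> {0..<n}" "j \<in> {0..<n}" "f i = f j"
  then show "i = j" using assms unfolding twin_free_def by (metis atLeastLessThan_iff)
qed

text \<open>All patterns used below are twin-free, so a list of vertices inducing the right adjacencies
is automatically an induced copy: no distinctness has to be checked.\<close>

lemma has_induced_listI:
  assumes "length xs = n" and "twin_free n H" and "set xs \<subseteq> V"
    and "\<forall>i<n. \<forall>j<n. E (xs ! i) (xs ! j) \<longleftrightarrow> H i j"
  shows "has_induced V E n H"
proof -
  have "inj_on (\<lambda>i. xs ! i) {0..<n}"
    using inj_on_if_twin_free[where E = E and f = "\<lambda>i. xs ! i", OF assms(2,4)] .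
  moreover have "(\<lambda>i. xs ! i) ` {0..<n} \<subseteq> V"
    using assms(1,3) nth_mem by fastforce
  ultimately show ?thesis unfolding has_induced_def using assms(4) by blast
qed

lemma twin_free_T2: "twin_free 7 T2"
  unfolding twin_free_def T2_def edges_of_def by (simp add: numeral_eq_Suc All_less_Suc)

lemma twin_free_X2: "twin_free 7 X2"
  unfolding twin_free_def X2_def edges_of_def by (simp add: numeral_eq_Suc All_less_Suc)

lemma twin_free_X3: "twin_free 7 X3"
  unfolding twin_free_def X3_def edges_of_def by (simp add: numeral_eq_Suc All_less_Suc)

lemma twin_free_triangle: "twin_free 3 (cycle_graph 3)"
  unfolding twin_free_def cycle_graph_def numeral_3_eq_3 All_less_Suc by simp

lemma mod_add_neq_mod:
  fixes x d n :: nat assumes "0 < d" "d < n" shows "(x + d) mod n \<noteq> x mod n"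
  using assms by (auto simp: mod_eq_dvd_iff_nat dest: dvd_imp_le)

lemma mod_eq_imp_eq_if_dist_less:
  fixes a b M :: int
  assumes "\<bar>a - b\<bar> < M" and "a mod M = b mod M"
  shows "a = b"
proof (rule ccontr)
  assume "a \<noteq> b"
  from assms(2) have "M dvd (a - b)" by (simp add: mod_eq_dvd_iff)
  then have "\<bar>M\<bar> \<le> \<bar>a - b\<bar>" using \<open>a \<noteq> b\<close> by (simp add: dvd_imp_le_int)
  with assms(1) show False by linarith
qed

lemma twin_free_cycle_graph:
  assumes "5 \<le> n" shows "twin_free n (cycle_graph n)"
  unfolding twin_free_def
proof (intro allI impI)
  fix i j assume ij: "i < n" "j < n" and same: "\<forall>k<n. cycle_graph n i k \<longleftrightarrow> cycle_graph n j k"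
  have succ_inj: "x = y" if "Suc x mod n = Suc y mod n" "x < n" "y < n" for x y
    using that by (auto simp: mod_if split: if_splits)
  show "i = j"
  proof (rule ccontr)
    assume "i \<noteq> j"
    have "cycle_graph n j (Suc i mod n)"
      using same[rule_format, of "Suc i mod n"] ij unfolding cycle_graph_def by simp
    then have j: "j = (i + 2) mod n"
      unfolding cycle_graph_def using succ_inj ij \<open>i \<noteq> j\<close> by (auto simp: mod_Suc_eq)
    have "cycle_graph n i (Suc j mod n)"
      using same[rule_format, of "Suc j mod n"] ij unfolding cycle_graph_def by simp
    then have "(i + 1 + 2) mod n = (i + 1) mod n \<or> i = (i + 4) mod n"
      using j ij unfolding cycle_graph_def by (simp add: mod_Suc_eq numeral_eq_Suc)
    moreover have "(i + 1 + 2) mod n \<noteq> (i + 1) mod n" "i \<noteq> (i + 4) mod n"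
      using assms ij mod_add_neq_mod[of 2 n "i + 1"] mod_add_neq_mod[of 4 n i] by simp_all
    ultimately show False by blast
  qed
qed

lemma is_holeI:
  assumes "5 \<le> n" and "f ` {0..<n} \<subseteq> V" and "\<forall>i<n. \<forall>j<n. E (f i) (f j) \<longleftrightarrow> cycle_graph n i j"
  shows "is_hole V E f n"
  unfolding is_hole_def using assms inj_on_if_twin_free[OF twin_free_cycle_graph] by blast

lemma cycle_graph_iff_off_by_one:
  "2 \<le> n \<Longrightarrow> i \<le> n - 2 \<Longrightarrow> j \<le> n - 2 \<Longrightarrow> cycle_graph n i j \<longleftrightarrow> i = j + 1 \<or> j = i + 1"
  unfolding cycle_graph_def by auto

section \<open>Strict orders from nested neighbourhood traces\<close>

lemma strict_po_on_if_total_preorder: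
  assumes lt: "\<And>a b. a \<in> S \<Longrightarrow> b \<in> S \<Longrightarrow> lt a b \<longleftrightarrow> \<not> le b a"
    and refl: "\<And>a. a \<in> S \<Longrightarrow> le a a"
    and trans: "\<And>a b d. a \<in> S \<Longrightarrow> b \<in> S \<Longrightarrow> d \<in> S \<Longrightarrow> le a b \<Longrightarrow> le b d \<Longrightarrow> le a d"
    and total: "\<And>a b. a \<in> S \<Longrightarrow> b \<in> S \<Longrightarrow> le a b \<or> le b a"
  shows "strict_po_on S lt"
  unfolding strict_po_on_def
proof
  show "irreflp_on S lt" using lt refl by (simp add: irreflp_on_def)
  show "transp_on S lt"
  proof (rule transp_onI)
    fix a b d assume S: "a \<in> S" "b \<in> S" "d \<in> S" and "lt a b" "lt b d"
    then have "\<not> le b a" "\<not> le d b" using lt by blast+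
    then have "le a b" using total S by blast
    then show "lt a d" using lt trans S \<open>\<not> le d b\<close> by blast
  qed
qed

lemma strict_po_on_by_traces:
  fixes E :: "'a \<Rightarrow> 'a \<Rightarrow> bool" and S P Q :: "'a set"
  assumes sym: "\<And>x y. E x y \<Longrightarrow> E y x"
    and lt: "\<And>u u'. lt u u' \<longleftrightarrow>
      (\<exists>w\<in>P. u \<in> nbhd E w \<and> u' \<notin> nbhd E w) \<or> (\<exists>w\<in>Q. u' \<in> nbhd E w \<and> u \<notin> nbhd E w)"
    and nested_P: "\<And>u u' x y. u \<in> S \<Longrightarrow> u' \<in> S \<Longrightarrow> x \<in> P \<Longrightarrow> y \<in> P \<Longrightarrow>
      E u x \<Longrightarrow> \<not> E u' x \<Longrightarrow> E u' y \<Longrightarrow> E u y"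
    and nested_Q: "\<And>u u' x y. u \<in> S \<Longrightarrow> u' \<in> S \<Longrightarrow> x \<in> Q \<Longrightarrow> y \<in> Q \<Longrightarrow>
      E u x \<Longrightarrow> \<not> E u' x \<Longrightarrow> E u' y \<Longrightarrow> E u y"
    and cross: "\<And>u u' x y. u \<in> S \<Longrightarrow> u' \<in> S \<Longrightarrow> x \<in> P \<Longrightarrow> y \<in> Q \<Longrightarrow>
      E u x \<Longrightarrow> \<not> E u' x \<Longrightarrow> E u y \<Longrightarrow> E u' y"
    and separating: "\<And>u u' x. u \<in> S \<Longrightarrow> u' \<in> S \<Longrightarrow> E u x \<Longrightarrow> \<not> E u' x \<Longrightarrow> x \<in> P \<union> Q"
  shows "strict_po_on S lt \<and> (\<forall>u\<in>S. \<forall>u'\<in>S. (\<not> lt u u' \<and> \<not> lt u' u) \<longleftrightarrow> nbhd E u = nbhd E u')"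
proof
  define le where "le u u' \<longleftrightarrow> (\<forall>x\<in>P. E u' x \<longrightarrow> E u x) \<and> (\<forall>y\<in>Q. E u y \<longrightarrow> E u' y)" for u u'
  have lt_le: "lt u u' \<longleftrightarrow> \<not> le u' u" for u u'
    unfolding lt le_def nbhd_def using sym by blast
  have total: "le u u' \<or> le u' u" if "u \<in> S" "u' \<in> S" for u u'
    unfolding le_def using nested_P[OF that] nested_Q[OF that] cross[OF that] cross[OF that(2,1)] by blast
  show "strict_po_on S lt"
  proof (rule strict_po_on_if_total_preorder[where le = le])
    show "lt a b \<longleftrightarrow> \<not> le b a" for a b by (rule lt_le)
    show "le a a" for a by (simp add: le_def)
    show "le a d" if "le a b" "le b d" for a b d using that unfolding le_def by blast
    show "le a b \<or> le b a" if "a \<in> S" "b \<in> S" for a b using total[OF that] .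
  qed
  show "\<forall>u\<in>S. \<forall>u'\<in>S. (\<not> lt u u' \<and> \<not> lt u' u) \<longleftrightarrow> nbhd E u = nbhd E u'"
  proof (intro ballI)
    fix u u' assume S: "u \<in> S" "u' \<in> S"
    have "(\<not> lt u u' \<and> \<not> lt u' u) \<longleftrightarrow> (\<forall>x\<in>P \<union> Q. E u x \<longleftrightarrow> E u' x)"
      unfolding lt_le le_def by blast
    also have "\<dots> \<longleftrightarrow> (\<forall>x. E u x \<longleftrightarrow> E u' x)"
      using separating[OF S] separating[OF S(2,1)] by blast
    also have "\<dots> \<longleftrightarrow> nbhd E u = nbhd E u'"
      unfolding nbhd_def by blast
    finally show "(\<not> lt u u' \<and> \<not> lt u' u) \<longleftrightarrow> nbhd E u = nbhd E u'" .
  qed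
qed

section \<open>A shortest hole in an almost bipartite permutation graph\<close>

locale abpg_shortest_hole =
  fixes V :: "'a set" and E :: "'a \<Rightarrow> 'a \<Rightarrow> bool" and c :: "nat \<Rightarrow> 'a" and m :: nat
  assumes simple: "simple_graph V E" and abpg: "almost_bip_perm V E"
    and shortest: "shortest_hole V E c m"
begin

lemma edge_sym: "E x y \<Longrightarrow> E y x" and edge_irrefl: "\<not> E x x" and edge_in_V: "E x y \<Longrightarrow> x \<in> V"
  using simple unfolding simple_graph_def by blast+

lemma edge_commute: "E x y \<longleftrightarrow> E y x"
  using edge_sym by blast

lemma no_triangle: "E x y \<Longrightarrow> E y z \<Longrightarrow> E x z \<Longrightarrow> False"
proof -
  assume xyz: "E x y" "E y z" "E x z"
  have "has_induced V E 3 (cycle_graph 3)"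
  proof (rule has_induced_listI[OF _ twin_free_triangle])
    show "set [x, y, z] \<subseteq> V" using xyz edge_in_V edge_sym by auto
    show "\<forall>i<3. \<forall>j<3. E ([x, y, z] ! i) ([x, y, z] ! j) \<longleftrightarrow> cycle_graph 3 i j"
      using xyz unfolding numeral_3_eq_3 cycle_graph_def by (simp add: All_less_Suc edge_irrefl edge_commute)
  qed simp
  with abpg show False unfolding almost_bip_perm_def by simp
qed

lemma no_induced_T2:
  assumes "E a0 a1" "E a1 a2" "E a0 a3" "E a3 a4" "E a0 a5" "E a5 a6"
    and "\<not> E a0 a2" "\<not> E a0 a4" "\<not> E a0 a6" "\<not> E a1 a3" "\<not> E a1 a4" "\<not> E a1 a5"
      "\<not> E a1 a6" "\<not> E a2 a3" "\<not> E a2 a4" "\<not> E a2 a5" "\<not> E a2 a6" "\<not> E a3 a5"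
      "\<not> E a3 a6" "\<not> E a4 a5" "\<not> E a4 a6"
  shows False
proof -
  have "has_induced V E 7 T2"
  proof (rule has_induced_listI[OF _ twin_free_T2])
    show "set [a0, a1, a2, a3, a4, a5, a6] \<subseteq> V"
      using assms(1-6) edge_in_V edge_sym by auto
    show "\<forall>i<7. \<forall>j<7. E ([a0, a1, a2, a3, a4, a5, a6] ! i) ([a0, a1, a2, a3, a4, a5, a6] ! j) \<longleftrightarrow> T2 i j"
      using assms unfolding T2_def edges_of_def
      by (simp add: numeral_eq_Suc All_less_Suc edge_irrefl edge_commute)
  qed simp
  with abpg show False unfolding almost_bip_perm_def by simp
qed

lemma no_induced_X2:
  assumes "E a0 a1" "E a1 a2" "E a2 a3" "E a3 a0" "E a0 a4" "E a1 a5" "E a2 a6"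
    and "\<not> E a0 a2" "\<not> E a0 a5" "\<not> E a0 a6" "\<not> E a1 a3" "\<not> E a1 a4" "\<not> E a1 a6"
      "\<not> E a2 a4" "\<not> E a2 a5" "\<not> E a3 a4" "\<not> E a3 a5" "\<not> E a3 a6" "\<not> E a4 a5"
      "\<not> E a4 a6" "\<not> E a5 a6"
  shows False
proof -
  have "has_induced V E 7 X2"
  proof (rule has_induced_listI[OF _ twin_free_X2])
    show "set [a0, a1, a2, a3, a4, a5, a6] \<subseteq> V"
      using assms(1-7) edge_in_V edge_sym by auto
    show "\<forall>i<7. \<forall>j<7. E ([a0, a1, a2, a3, a4, a5, a6] ! i) ([a0, a1, a2, a3, a4, a5, a6] ! j) \<longleftrightarrow> X2 i j"
      using assms unfolding X2_def edges_of_def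
      by (simp add: numeral_eq_Suc All_less_Suc edge_irrefl edge_commute)
  qed simp
  with abpg show False unfolding almost_bip_perm_def by simp
qed

lemma no_induced_X3:
  assumes "E a0 a1" "E a1 a2" "E a3 a4" "E a4 a5" "E a0 a3" "E a1 a4" "E a2 a5" "E a1 a6"
    and "\<not> E a0 a2" "\<not> E a0 a4" "\<not> E a0 a5" "\<not> E a0 a6" "\<not> E a1 a3" "\<not> E a1 a5"
      "\<not> E a2 a3" "\<not> E a2 a4" "\<not> E a2 a6" "\<not> E a3 a5" "\<not> E a3 a6" "\<not> E a4 a6" "\<not> E a5 a6"
  shows False
proof -
  have "has_induced V E 7 X3"
  proof (rule has_induced_listI[OF _ twin_free_X3])
    show "set [a0, a1, a2, a3, a4, a5, a6] \<subseteq> V"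
      using assms(1-8) edge_in_V edge_sym by auto
    show "\<forall>i<7. \<forall>j<7. E ([a0, a1, a2, a3, a4, a5, a6] ! i) ([a0, a1, a2, a3, a4, a5, a6] ! j) \<longleftrightarrow> X3 i j"
      using assms unfolding X3_def edges_of_def
      by (simp add: numeral_eq_Suc All_less_Suc edge_irrefl edge_commute)
  qed simp
  with abpg show False unfolding almost_bip_perm_def by simp
qed

lemma hole: "is_hole V E c m"
  using shortest unfolding shortest_hole_def by blast

lemma hole_min: "is_hole V E f n \<Longrightarrow> m \<le> n"
  using shortest unfolding shortest_hole_def by blast

lemma hole_length_ge_10: "10 \<le> m"
proof (rule ccontr)
  assume "\<not> 10 \<le> m"
  moreover have "5 \<le> m" and "has_induced V E m (cycle_graph m)"
    using hole unfolding is_hole_def has_induced_def by blast+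
  ultimately show False using abpg unfolding almost_bip_perm_def by auto
qed

abbreviation cy :: "int \<Rightarrow> 'a" where "cy \<equiv> cyc c m"
abbreviation C :: "'a set" where "C \<equiv> c ` {0..<m}"
abbreviation A :: "int \<Rightarrow> 'a set" where "A \<equiv> Aset V E c m"
abbreviation B :: "int \<Rightarrow> 'a set" where "B \<equiv> Bset V E c m"

lemma m_pos: "0 < int m"
  using hole_length_ge_10 by simp

lemma hole_inj: "inj_on c {0..<m}" and hole_subset_V: "C \<subseteq> V"
  and hole_adj: "i < m \<Longrightarrow> j < m \<Longrightarrow> E (c i) (c j) \<longleftrightarrow> cycle_graph m i j"
  using hole unfolding is_hole_def by blast+

lemma cyc_index_less: "nat (t mod int m) < m"
  using hole_length_ge_10 by (simp add: nat_less_iff)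

lemma cy_in_V: "cy t \<in> V"
  using hole_subset_V cyc_index_less unfolding cyc_def by auto

lemma C_eq_range_cy: "C = range cy"
proof
  show "range cy \<subseteq> C" using cyc_index_less unfolding cyc_def by auto
  show "C \<subseteq> range cy"
  proof
    fix x assume "x \<in> C"
    then obtain k where "k < m" "x = c k" by auto
    then have "x = cy (int k)" unfolding cyc_def by simp
    then show "x \<in> range cy" by blast
  qed
qed

lemma cy_eq_iff: "cy p = cy q \<longleftrightarrow> p mod int m = q mod int m"
proof
  assume "cy p = cy q"
  then have "nat (p mod int m) = nat (q mod int m)"
    using hole_inj cyc_index_less unfolding cyc_def by (simp add: inj_on_eq_iff)
  then show "p mod int m = q mod int m" using hole_length_ge_10 by (simp add: nat_eq_iff2)
qed (simp add: cyc_def)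

lemma cy_eq_iff_small: "\<bar>p - q\<bar> < int m \<Longrightarrow> cy p = cy q \<longleftrightarrow> p = q"
  using cy_eq_iff mod_eq_imp_eq_if_dist_less by blast

lemma cy_adj_iff: "E (cy p) (cy q) \<longleftrightarrow> q mod int m = (p + 1) mod int m \<or> p mod int m = (q + 1) mod int m"
proof -
  have succ: "nat (b mod int m) = Suc (nat (a mod int m)) mod m \<longleftrightarrow> b mod int m = (a + 1) mod int m"
    for a b
  proof -
    have "int (Suc (nat (a mod int m)) mod m) = (a mod int m + 1) mod int m"
      using m_pos by (simp add: zmod_int ac_simps)
    also have "\<dots> = (a + 1) mod int m" by (simp add: mod_simps)
    finally show ?thesis using m_pos by (metis int_nat_eq nat_int pos_mod_sign)
  qed
  have "E (cy p) (cy q) \<longleftrightarrow> cycle_graph m (nat (p mod int m)) (nat (q mod int m))"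
    unfolding cyc_def using hole_adj cyc_index_less by blast
  also have "\<dots> \<longleftrightarrow> nat (q mod int m) = Suc (nat (p mod int m)) mod m
      \<or> nat (p mod int m) = Suc (nat (q mod int m)) mod m"
    using cyc_index_less unfolding cycle_graph_def by blast
  finally show ?thesis by (simp only: succ)
qed

lemma cy_adj_iff_small: "\<bar>p - q\<bar> \<le> int m - 2 \<Longrightarrow> E (cy p) (cy q) \<longleftrightarrow> \<bar>p - q\<bar> = 1"
proof -
  assume small: "\<bar>p - q\<bar> \<le> int m - 2"
  have "q mod int m = (p + 1) mod int m \<longleftrightarrow> q = p + 1"
    using mod_eq_imp_eq_if_dist_less[of q "p + 1" "int m"] small by auto
  moreover have "p mod int m = (q + 1) mod int m \<longleftrightarrow> p = q + 1"
    using mod_eq_imp_eq_if_dist_less[of p "q + 1" "int m"] small by auto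
  ultimately show ?thesis using cy_adj_iff by auto
qed

lemma nbhd_inter_C_eq_iff:
  assumes "S \<subseteq> C" shows "nbhd E u \<inter> C = S \<longleftrightarrow> (\<forall>t. E u (cy t) \<longleftrightarrow> cy t \<in> S)"
  using assms unfolding C_eq_range_cy nbhd_def by blast

lemma A_iff: "u \<in> A i \<longleftrightarrow> u \<in> V \<and> (\<forall>t. E u (cy t) \<longleftrightarrow> cy t = cy (i - 1) \<or> cy t = cy (i + 1))"
  unfolding Aset_def using nbhd_inter_C_eq_iff[of "{cy (i - 1), cy (i + 1)}"] C_eq_range_cy by auto

lemma B_iff: "u \<in> B i \<longleftrightarrow> u \<in> V \<and> (\<forall>t. E u (cy t) \<longleftrightarrow> cy t = cy i)"
  unfolding Bset_def using nbhd_inter_C_eq_iff[of "{cy i}"] C_eq_range_cy by auto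

lemma A_adj: "u \<in> A i \<Longrightarrow> E u (cy t) \<longleftrightarrow> cy t = cy (i - 1) \<or> cy t = cy (i + 1)"
  using A_iff by blast

lemma B_adj: "w \<in> B i \<Longrightarrow> E w (cy t) \<longleftrightarrow> cy t = cy i"
  using B_iff by blast

lemma cy_as_offset: obtains k :: nat where "k < m" "cy t = cy (a + int k)"
proof
  show "nat ((t - a) mod int m) < m" by (rule cyc_index_less)
  show "cy t = cy (a + int (nat ((t - a) mod int m)))"
    using m_pos by (simp add: cy_eq_iff mod_simps)
qed

lemma cy_add_m: "cy (p + int m) = cy p"
  by (simp add: cy_eq_iff)

lemma cy_segment_adj:
  assumes "k + 2 \<le> m" "k + 2 \<le> n" "s \<le> k" "t \<le> k"
  shows "E (cy (a + int s)) (cy (a + int t)) \<longleftrightarrow> cycle_graph n s t"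
proof -
  have "E (cy (a + int s)) (cy (a + int t)) \<longleftrightarrow> \<bar>int s - int t\<bar> = 1"
    using assms cy_adj_iff_small[of "a + int s" "a + int t"] by simp
  then show ?thesis using assms cycle_graph_iff_off_by_one[of n s t] by auto
qed

text \<open>In the next two lemmas \<open>y\<close>, respectively the edge \<open>y y'\<close>, closes the path
\<open>c\<^sub>a ... c\<^bsub>a+k\<^esub>\<close> of \<open>C\<close> into a hole shorter than \<open>C\<close>.\<close>

lemma no_short_hole_via_vertex:
  fixes k :: nat
  assumes k: "3 \<le> k" "k + 3 \<le> m"
    and adj: "\<And>t. t \<le> k \<Longrightarrow> E y (cy (a + int t)) \<longleftrightarrow> t = 0 \<or> t = k"
  shows False
proof -
  define f where "f t = (if t \<le> k then cy (a + int t) else y)" for t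
  have "is_hole V E f (k + 2)"
  proof (rule is_holeI)
    show "5 \<le> k + 2" using k by simp
    show "f ` {0..<k + 2} \<subseteq> V"
      using cy_in_V edge_in_V adj[of 0] unfolding f_def by auto
    show "\<forall>s<k + 2. \<forall>t<k + 2. E (f s) (f t) \<longleftrightarrow> cycle_graph (k + 2) s t"
    proof (intro allI impI)
      fix s t assume "s < k + 2" "t < k + 2"
      then consider "s \<le> k" "t \<le> k" | "s \<le> k" "t = k + 1" | "s = k + 1" "t \<le> k" | "s = k + 1" "t = k + 1"
        by linarith
      then show "E (f s) (f t) \<longleftrightarrow> cycle_graph (k + 2) s t"
      proof cases
        case 1
        then show ?thesis using k cy_segment_adj[of k "k + 2" s t a] unfolding f_def by simp
      next
        case 2
        then show ?thesis using adj[of s] edge_commute unfolding f_def cycle_graph_def by auto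
      next
        case 3
        then show ?thesis using adj[of t] unfolding f_def cycle_graph_def by auto
      next
        case 4
        then show ?thesis using edge_irrefl unfolding f_def cycle_graph_def by auto
      qed
    qed
  qed
  then show False using hole_min k by fastforce
qed

lemma no_short_hole_via_edge:
  fixes k :: nat
  assumes k: "2 \<le> k" "k + 4 \<le> m" and "E y y'"
    and adj: "\<And>t. t \<le> k \<Longrightarrow> E y (cy (a + int t)) \<longleftrightarrow> t = k"
    and adj': "\<And>t. t \<le> k \<Longrightarrow> E y' (cy (a + int t)) \<longleftrightarrow> t = 0"
  shows False
proof -
  define f where "f t = (if t \<le> k then cy (a + int t) else if t = k + 1 then y else y')" for t
  have wrap: "Suc (Suc (Suc k)) mod (k + 3) = 0" by (simp add: numeral_3_eq_3)
  have "is_hole V E f (k + 3)"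
  proof (rule is_holeI)
    show "5 \<le> k + 3" using k by simp
    show "f ` {0..<k + 3} \<subseteq> V"
      using cy_in_V edge_in_V adj[of k] adj'[of 0] unfolding f_def by auto
    show "\<forall>s<k + 3. \<forall>t<k + 3. E (f s) (f t) \<longleftrightarrow> cycle_graph (k + 3) s t"
    proof (intro allI impI)
      fix s t assume "s < k + 3" "t < k + 3"
      then consider "s \<le> k" "t \<le> k" | "s \<le> k" "t = k + 1" | "s \<le> k" "t = k + 2"
        | "s = k + 1" "t \<le> k" | "s = k + 2" "t \<le> k"
        | "s = k + 1" "t = k + 2" | "s = k + 2" "t = k + 1" | "s = t" "k < t"
        by linarith
      then show "E (f s) (f t) \<longleftrightarrow> cycle_graph (k + 3) s t"
      proof cases
        case 1
        then show ?thesis using k cy_segment_adj[of k "k + 3" s t a] unfolding f_def by simp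
      next
        case 2
        then show ?thesis using adj[of s] edge_commute unfolding f_def cycle_graph_def by auto
      next
        case 3
        then show ?thesis using adj'[of s] edge_commute wrap unfolding f_def cycle_graph_def by auto
      next
        case 4
        then show ?thesis using adj[of t] unfolding f_def cycle_graph_def by auto
      next
        case 5
        then show ?thesis using adj'[of t] wrap unfolding f_def cycle_graph_def by auto
      next
        case 6
        then show ?thesis using \<open>E y y'\<close> unfolding f_def cycle_graph_def by simp
      next
        case 7
        then show ?thesis using \<open>E y y'\<close> edge_commute wrap unfolding f_def cycle_graph_def by simp
      next
        case 8
        then show ?thesis using edge_irrefl \<open>t < k + 3\<close> unfolding cycle_graph_def by (simp add: mod_if)
      qed
    qed
  qed
  then show False using hole_min k by fastforce
qed

section \<open>Vertices attached to the hole\<close>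

text \<open>Distance 1 or \<open>m - 1\<close> would give a triangle, any distance in between a shorter hole.\<close>

lemma next_nbr_on_hole:
  assumes xa: "E x (cy a)" and xt: "E x (cy t)" "cy t \<noteq> cy a"
  obtains k :: nat where "k = 2 \<or> k = m - 2" "E x (cy (a + int k))"
    "\<And>j. 0 < j \<Longrightarrow> j < k \<Longrightarrow> \<not> E x (cy (a + int j))"
proof -
  define S where "S = {k::nat. 0 < k \<and> k < m \<and> E x (cy (a + int k))}"
  obtain kt where "kt < m" "cy t = cy (a + int kt)" by (rule cy_as_offset)
  with xt have "kt \<in> S" unfolding S_def by (cases "kt = 0") auto
  define k where "k = (LEAST k. k \<in> S)"
  have "k \<in> S" unfolding k_def using \<open>kt \<in> S\<close> by (rule LeastI)
  then have k: "0 < k" "k < m" "E x (cy (a + int k))" unfolding S_def by auto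
  have below: "\<not> E x (cy (a + int j))" if "0 < j" "j < k" for j
    using that k not_less_Least[of j "\<lambda>k. k \<in> S"] unfolding k_def S_def by auto
  have "k \<noteq> 1"
  proof
    assume "k = 1"
    moreover have "E (cy a) (cy (a + 1))" by (simp add: cy_adj_iff)
    ultimately show False using no_triangle[OF xa _ k(3)] by simp
  qed
  moreover have "k \<noteq> m - 1"
  proof
    assume "k = m - 1"
    then have "E (cy a) (cy (a + int k))"
      using m_pos by (simp add: cy_adj_iff of_nat_diff mod_simps)
    then show False using no_triangle[OF xa _ k(3)] by blast
  qed
  moreover have "\<not> (3 \<le> k \<and> k + 3 \<le> m)"
  proof
    assume "3 \<le> k \<and> k + 3 \<le> m"
    then show False
    proof (intro no_short_hole_via_vertex[of k x a])
      fix j assume "j \<le> k"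
      then show "E x (cy (a + int j)) \<longleftrightarrow> j = 0 \<or> j = k"
        using below[of j] k xa by (cases "j = 0"; cases "j = k") auto
    qed auto
  qed
  ultimately have "k = 2 \<or> k = m - 2" using k by linarith
  then show ?thesis using that k below by blast
qed

lemma in_A_if_next_nbr_wraps:
  assumes xb: "E x (cy b)" and xb': "E x (cy (b + int (m - 2)))"
    and gap: "\<And>j. 0 < j \<Longrightarrow> j < m - 2 \<Longrightarrow> \<not> E x (cy (b + int j))"
  shows "x \<in> A (b - 1)"
  unfolding A_iff
proof (intro conjI allI)
  show "x \<in> V" using xb by (rule edge_in_V)
  fix t
  obtain k where k: "k < m" "cy t = cy (b + int k)" by (rule cy_as_offset)
  have "cy (b - 1 - 1) = cy (b + int (m - 2) - int m)"
    using hole_length_ge_10 by (simp add: of_nat_diff)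
  also have "\<dots> = cy (b + int (m - 2))" using cy_add_m[of "b + int (m - 2) - int m"] by simp
  finally have prev: "cy (b - 1 - 1) = cy (b + int (m - 2))" .
  have offset_eq: "cy (b + int k) = cy (b + int j) \<longleftrightarrow> k = j" if "j < m" for j
    using cy_eq_iff_small[of "b + int k" "b + int j"] k that by auto
  have "\<not> E x (cy (b + int (m - 1)))"
  proof
    assume "E x (cy (b + int (m - 1)))"
    moreover have "E (cy b) (cy (b + int (m - 1)))"
      using m_pos by (simp add: cy_adj_iff of_nat_diff mod_simps)
    ultimately show False using no_triangle[OF xb] by blast
  qed
  then have "E x (cy (b + int k)) \<longleftrightarrow> k = 0 \<or> k = m - 2"
    using gap[of k] xb xb' k(1) by (cases "k = 0"; cases "k = m - 2"; cases "k = m - 1") auto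
  then show "E x (cy t) \<longleftrightarrow> cy t = cy (b - 1 - 1) \<or> cy t = cy (b - 1 + 1)"
    unfolding k(2) prev using offset_eq[of 0] offset_eq[of "m - 2"] hole_length_ge_10 by auto
qed

text \<open>The next neighbour after \<open>c\<^bsub>p+4\<^esub>\<close> cannot wrap around past \<open>c\<^sub>p\<close>, so it is
\<open>c\<^bsub>p+6\<^esub>\<close>, and then \<open>x\<close> is the centre of an induced \<open>T\<^sub>2\<close>.\<close>

lemma no_nbrs_at_distance_4:
  assumes xp: "E x (cy p)" and x4: "E x (cy (p + 4))"
  shows False
proof -
  have "cy p \<noteq> cy (p + 4)" using hole_length_ge_10 by (simp add: cy_eq_iff_small)
  then obtain k where k: "k = 2 \<or> k = m - 2" "E x (cy (p + 4 + int k))"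
    "\<And>j. 0 < j \<Longrightarrow> j < k \<Longrightarrow> \<not> E x (cy (p + 4 + int j))"
    using next_nbr_on_hole[OF x4 xp] by blast
  have "k \<noteq> m - 2"
  proof
    assume "k = m - 2"
    then have "\<not> E x (cy (p + 4 + int (m - 4)))"
      using k(3)[of "m - 4"] hole_length_ge_10 by simp
    moreover have "cy (p + 4 + int (m - 4)) = cy p"
      using hole_length_ge_10 cy_add_m[of p] by (simp add: of_nat_diff)
    ultimately show False using xp by simp
  qed
  then have x6: "E x (cy (p + 6))" using k by (simp add: ac_simps)
  have "E (cy p) (cy (p - 1))" "E (cy (p + 4)) (cy (p + 3))" "E (cy (p + 6)) (cy (p + 7))"
    using hole_length_ge_10 by (simp_all add: cy_adj_iff_small)
  then have "\<not> E x (cy (p - 1))" "\<not> E x (cy (p + 3))" "\<not> E x (cy (p + 7))"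
    using no_triangle xp x4 x6 by blast+
  then show False
    using no_induced_T2[of x "cy p" "cy (p - 1)" "cy (p + 4)" "cy (p + 3)" "cy (p + 6)" "cy (p + 7)"]
      xp x4 x6 hole_length_ge_10 by (simp add: cy_adj_iff_small)
qed

lemma nbr_of_hole_cases:
  assumes xp: "E x (cy p)"
  shows "x \<in> B p \<or> x \<in> A (p - 1) \<or> x \<in> A (p + 1)"
proof (cases "\<exists>t. E x (cy t) \<and> cy t \<noteq> cy p")
  case False
  then have "x \<in> B p" unfolding B_iff using xp edge_in_V by metis
  then show ?thesis by blast
next
  case True
  then obtain t where t: "E x (cy t)" "cy t \<noteq> cy p" by blast
  obtain k where k: "k = 2 \<or> k = m - 2" "E x (cy (p + int k))"
    "\<And>j. 0 < j \<Longrightarrow> j < k \<Longrightarrow> \<not> E x (cy (p + int j))"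
    using next_nbr_on_hole[OF xp t] by blast
  show ?thesis
  proof (cases "k = m - 2")
    case True
    then show ?thesis using in_A_if_next_nbr_wraps[OF xp] k by blast
  next
    case False
    then have x2: "E x (cy (p + 2))" using k by simp
    have "cy p \<noteq> cy (p + 2)" using hole_length_ge_10 by (simp add: cy_eq_iff_small)
    then obtain k' where k': "k' = 2 \<or> k' = m - 2" "E x (cy (p + 2 + int k'))"
      "\<And>j. 0 < j \<Longrightarrow> j < k' \<Longrightarrow> \<not> E x (cy (p + 2 + int j))"
      using next_nbr_on_hole[OF x2 xp] by blast
    moreover have "k' \<noteq> 2" using no_nbrs_at_distance_4[OF xp] k'(2) by (auto simp: ac_simps)
    ultimately have "x \<in> A (p + 2 - 1)" using in_A_if_next_nbr_wraps[OF x2] by blast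
    then show ?thesis by (simp add: add.commute)
  qed
qed

section \<open>The orders on \<open>A\<^sub>i\<close> and \<open>B\<^sub>i\<close>\<close>

abbreviation A_left :: "int \<Rightarrow> 'a set" where "A_left i \<equiv> B (i - 2) \<union> A (i - 1)"
abbreviation A_right :: "int \<Rightarrow> 'a set" where "A_right i \<equiv> A (i + 1) \<union> B (i + 2)"
abbreviation B_left :: "int \<Rightarrow> 'a set" where "B_left i \<equiv> A (i - 2) \<union> B (i - 1)"
abbreviation B_right :: "int \<Rightarrow> 'a set" where "B_right i \<equiv> B (i + 1) \<union> A (i + 2)"

lemma A_near_hole: "u \<in> A i \<Longrightarrow>
    E u (cy (i - 1)) \<and> E u (cy (i + 1)) \<and> \<not> E u (cy i) \<and> \<not> E u (cy (i - 2)) \<and> \<not> E u (cy (i + 2))"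
  and B_near_hole: "w \<in> B i \<Longrightarrow>
    E w (cy i) \<and> \<not> E w (cy (i - 1)) \<and> \<not> E w (cy (i + 1)) \<and> \<not> E w (cy (i - 2)) \<and> \<not> E w (cy (i + 2))"
  and A_left_near_hole: "x \<in> A_left i \<Longrightarrow>
    E x (cy (i - 2)) \<and> \<not> E x (cy (i - 1)) \<and> \<not> E x (cy (i + 1)) \<and> \<not> E x (cy (i + 2))"
  and A_right_near_hole: "x \<in> A_right i \<Longrightarrow>
    E x (cy (i + 2)) \<and> \<not> E x (cy (i + 1)) \<and> \<not> E x (cy (i - 1)) \<and> \<not> E x (cy (i - 2))"
  and B_left_near_hole: "x \<in> B_left i \<Longrightarrow>
    E x (cy (i - 1)) \<and> \<not> E x (cy i) \<and> \<not> E x (cy (i + 1)) \<and> \<not> E x (cy (i - 2)) \<and> \<not> E x (cy (i + 2))"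
  and B_right_near_hole: "x \<in> B_right i \<Longrightarrow>
    E x (cy (i + 1)) \<and> \<not> E x (cy i) \<and> \<not> E x (cy (i - 1)) \<and> \<not> E x (cy (i - 2)) \<and> \<not> E x (cy (i + 2))"
  using hole_length_ge_10 by (auto simp: A_adj B_adj cy_eq_iff_small)

lemma A_left_traces_nested:
  assumes u: "u \<in> A i" "u' \<in> A i" and x: "x \<in> A_left i" "y \<in> A_left i"
    and "E u x" "\<not> E u' x" "E u' y"
  shows "E u y"
proof (rule ccontr)
  assume "\<not> E u y"
  note near = A_near_hole[OF u(1)] A_near_hole[OF u(2)] A_left_near_hole[OF x(1)] A_left_near_hole[OF x(2)]
  have "\<not> E u u'" "\<not> E x y" using no_triangle near edge_sym by blast+
  then show False
    using no_induced_X2[of u "cy (i + 1)" u' "cy (i - 1)" x "cy (i + 2)" y] near assms \<open>\<not> E u y\<close>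
      hole_length_ge_10 by (simp add: cy_adj_iff_small edge_commute)
qed

lemma A_right_traces_nested:
  assumes u: "u \<in> A i" "u' \<in> A i" and x: "x \<in> A_right i" "y \<in> A_right i"
    and "E u x" "\<not> E u' x" "E u' y"
  shows "E u y"
proof (rule ccontr)
  assume "\<not> E u y"
  note near = A_near_hole[OF u(1)] A_near_hole[OF u(2)] A_right_near_hole[OF x(1)] A_right_near_hole[OF x(2)]
  have "\<not> E u u'" "\<not> E x y" using no_triangle near edge_sym by blast+
  then show False
    using no_induced_X2[of u "cy (i - 1)" u' "cy (i + 1)" x "cy (i - 2)" y] near assms \<open>\<not> E u y\<close>
      hole_length_ge_10 by (simp add: cy_adj_iff_small edge_commute)
qed

lemma A_traces_cross:
  assumes u: "u \<in> A i" "u' \<in> A i" and x: "x \<in> A_left i" and y: "y \<in> A_right i"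
    and "E u x" "\<not> E u' x" "E u y"
  shows "E u' y"
proof (rule ccontr)
  assume "\<not> E u' y"
  note near = A_near_hole[OF u(1)] A_near_hole[OF u(2)] A_left_near_hole[OF x] A_right_near_hole[OF y]
  have "\<not> E u u'" "\<not> E x y" using no_triangle near assms edge_sym by blast+
  then show False
    using no_induced_X3[of x u "cy (i + 1)" "cy (i - 2)" "cy (i - 1)" u' y] near assms \<open>\<not> E u' y\<close>
      hole_length_ge_10 by (simp add: cy_adj_iff_small edge_commute)
qed

text \<open>Otherwise \<open>u\<close>, \<open>x\<close> and the arc \<open>c\<^bsub>i+4\<^esub> ... c\<^bsub>i-1\<^esub>\<close> form a hole of length \<open>m - 2\<close>.\<close>

lemma A_not_adj_A_plus_3:
  assumes u: "u \<in> A i" and x: "x \<in> A (i + 3)"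
  shows "\<not> E u x"
proof
  assume "E u x"
  show False
  proof (rule no_short_hole_via_edge[of "m - 5" u x "i + 4"])
    fix t assume t: "t \<le> m - 5"
    have "E u (cy (i + 4 + int t)) \<longleftrightarrow>
        cy (i + 4 + int t) = cy (i - 1 + int m) \<or> cy (i + 4 + int t) = cy (i + 1 + int m)"
      using A_adj[OF u] by (simp add: cy_add_m)
    then show "E u (cy (i + 4 + int t)) \<longleftrightarrow> t = m - 5"
      using t hole_length_ge_10 by (auto simp: cy_eq_iff_small)
    have "E x (cy (i + 4 + int t)) \<longleftrightarrow>
        cy (i + 4 + int t) = cy (i + 2 + int m) \<or> cy (i + 4 + int t) = cy (i + 4)"
      using A_adj[OF x] cy_add_m[of "i + 2"] by (simp add: add.commute)
    then show "E x (cy (i + 4 + int t)) \<longleftrightarrow> t = 0"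
      using t hole_length_ge_10 by (auto simp: cy_eq_iff_small)
  qed (use \<open>E u x\<close> hole_length_ge_10 in auto)
qed

lemma A_separating:
  assumes u: "u \<in> A i" "u' \<in> A i" and "E u x" "\<not> E u' x"
  shows "x \<in> A_left i \<union> A_right i"
proof -
  note near = A_near_hole[OF u(1)] A_near_hole[OF u(2)]
  have "\<not> E u u'" "\<not> E x (cy (i - 1))" "\<not> E x (cy (i + 1))"
    using no_triangle near assms edge_sym by blast+
  consider "\<not> E x (cy (i - 2))" "\<not> E x (cy (i + 2))" | "E x (cy (i + 2))" | "E x (cy (i - 2))"
    by blast
  then show ?thesis
  proof cases
    case 1
    then have False
      using no_induced_X2[of "cy (i - 1)" u "cy (i + 1)" u' "cy (i - 2)" x "cy (i + 2)"]
        near assms \<open>\<not> E u u'\<close> \<open>\<not> E x (cy (i - 1))\<close> \<open>\<not> E x (cy (i + 1))\<close> hole_length_ge_10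
      by (simp add: cy_adj_iff_small edge_commute)
    then show ?thesis ..
  next
    case 2
    have "x \<notin> A (i + 3)" using A_not_adj_A_plus_3[OF u(1)] \<open>E u x\<close> by blast
    then show ?thesis using nbr_of_hole_cases[OF 2] by (auto simp: add.commute)
  next
    case 3
    have "x \<notin> A (i - 3)" using A_not_adj_A_plus_3[of x "i - 3" u] u(1) \<open>E u x\<close> edge_sym by auto
    then show ?thesis using nbr_of_hole_cases[OF 3] by (auto simp: add.commute)
  qed
qed

lemma B_left_traces_nested:
  assumes w: "w \<in> B i" "w' \<in> B i" and x: "x \<in> B_left i" "y \<in> B_left i"
    and "E w x" "\<not> E w' x" "E w' y"
  shows "E w y"
proof (rule ccontr)
  assume "\<not> E w y"
  note near = B_near_hole[OF w(1)] B_near_hole[OF w(2)] B_left_near_hole[OF x(1)] B_left_near_hole[OF x(2)]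
  have "\<not> E w w'" "\<not> E x y" using no_triangle near edge_sym by blast+
  then show False
    using no_induced_T2[of "cy i" w x w' y "cy (i + 1)" "cy (i + 2)"] near assms \<open>\<not> E w y\<close>
      hole_length_ge_10 by (simp add: cy_adj_iff_small edge_commute)
qed

lemma B_right_traces_nested:
  assumes w: "w \<in> B i" "w' \<in> B i" and x: "x \<in> B_right i" "y \<in> B_right i"
    and "E w x" "\<not> E w' x" "E w' y"
  shows "E w y"
proof (rule ccontr)
  assume "\<not> E w y"
  note near = B_near_hole[OF w(1)] B_near_hole[OF w(2)] B_right_near_hole[OF x(1)] B_right_near_hole[OF x(2)]
  have "\<not> E w w'" "\<not> E x y" using no_triangle near edge_sym by blast+
  then show False
    using no_induced_T2[of "cy i" w x w' y "cy (i - 1)" "cy (i - 2)"] near assms \<open>\<not> E w y\<close>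
      hole_length_ge_10 by (simp add: cy_adj_iff_small edge_commute)
qed

lemma B_traces_cross:
  assumes w: "w \<in> B i" "w' \<in> B i" and x: "x \<in> B_left i" and y: "y \<in> B_right i"
    and "E w x" "\<not> E w' x" "E w y"
  shows "E w' y"
proof (rule ccontr)
  assume "\<not> E w' y"
  note near = B_near_hole[OF w(1)] B_near_hole[OF w(2)] B_left_near_hole[OF x] B_right_near_hole[OF y]
  have "\<not> E w w'" "\<not> E x y" using no_triangle near assms edge_sym by blast+
  then show False
    using no_induced_X3[of "cy (i - 1)" "cy i" "cy (i + 1)" x w y w'] near assms \<open>\<not> E w' y\<close>
      hole_length_ge_10 by (simp add: cy_adj_iff_small edge_commute)
qed

lemma no_pentagon_via_edge:
  assumes "E y y'" "E y (cy (a + 2))" "\<not> E y (cy a)" "\<not> E y (cy (a + 1))"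
    and "E y' (cy a)" "\<not> E y' (cy (a + 1))" "\<not> E y' (cy (a + 2))"
  shows False
proof (rule no_short_hole_via_edge[of 2 y y' a])
  fix t :: nat assume "t \<le> 2"
  then have "t = 0 \<or> t = 1 \<or> t = 2" by auto
  then show "E y (cy (a + int t)) \<longleftrightarrow> t = 2" "E y' (cy (a + int t)) \<longleftrightarrow> t = 0"
    using assms by auto
qed (use assms hole_length_ge_10 in auto)

lemma B_separating:
  assumes w: "w \<in> B i" "w' \<in> B i" and wx: "E w x" and w'x: "\<not> E w' x"
  shows "x \<in> B_left i \<union> B_right i"
proof -
  note near = B_near_hole[OF w(1)] B_near_hole[OF w(2)]
  have x0: "\<not> E x (cy i)" using no_triangle near wx edge_sym by blast
  have "x \<notin> A i"
  proof
    assume "x \<in> A i"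
    then show False
      using no_induced_X2[of "cy (i - 1)" "cy i" "cy (i + 1)" x "cy (i - 2)" w' "cy (i + 2)"]
        A_near_hole[of x i] near w'x hole_length_ge_10 by (simp add: cy_adj_iff_small edge_commute)
  qed
  consider "\<not> E x (cy (i - 2))" "\<not> E x (cy (i - 1))" "\<not> E x (cy (i + 1))" "\<not> E x (cy (i + 2))"
    | "E x (cy (i + 1))" | "E x (cy (i - 1))" | "E x (cy (i + 2))" | "E x (cy (i - 2))"
    by blast
  then show ?thesis
  proof cases
    case 1
    then have False
      using no_induced_T2[of "cy i" "cy (i - 1)" "cy (i - 2)" "cy (i + 1)" "cy (i + 2)" w x]
        near wx x0 hole_length_ge_10 by (simp add: cy_adj_iff_small edge_commute)
    then show ?thesis ..
  next
    case 2
    then show ?thesis using nbr_of_hole_cases[OF 2] \<open>x \<notin> A i\<close> by (auto simp: add.commute)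
  next
    case 3
    then show ?thesis using nbr_of_hole_cases[OF 3] \<open>x \<notin> A i\<close> by (auto simp: add.commute)
  next
    case 4
    have "x \<in> B (i + 2) \<or> x \<in> A (i + 1) \<or> x \<in> A (i + 3)"
      using nbr_of_hole_cases[OF 4] by (auto simp: add.commute)
    moreover have "x \<notin> A (i + 1)" using x0 A_near_hole[of x "i + 1"] by auto
    moreover have False if "x \<in> B (i + 2) \<or> x \<in> A (i + 3)"
      using no_pentagon_via_edge[of x w i] that near wx 4 x0 hole_length_ge_10
      by (auto simp: B_adj A_adj cy_eq_iff_small edge_commute)
    ultimately have False by blast
    then show ?thesis ..
  next
    case 5
    have "x \<in> B (i - 2) \<or> x \<in> A (i - 3) \<or> x \<in> A (i - 1)"
      using nbr_of_hole_cases[OF 5] by (auto simp: add.commute)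
    moreover have "x \<notin> A (i - 1)" using x0 A_near_hole[of x "i - 1"] by auto
    moreover have False if "x \<in> B (i - 2) \<or> x \<in> A (i - 3)"
      using no_pentagon_via_edge[of w x "i - 2"] that near wx 5 x0 hole_length_ge_10
      by (auto simp: B_adj A_adj cy_eq_iff_small edge_commute)
    ultimately have False by blast
    then show ?thesis ..
  qed
qed

lemma A_order:
  "strict_po_on (A i) (ltA V E c m i) \<and>
    (\<forall>u\<in>A i. \<forall>u'\<in>A i. (\<not> ltA V E c m i u u' \<and> \<not> ltA V E c m i u' u) \<longleftrightarrow> nbhd E u = nbhd E u')"
  by (rule strict_po_on_by_traces[OF edge_sym ltA_def A_left_traces_nested A_right_traces_nested
        A_traces_cross A_separating])

lemma B_order:
  "strict_po_on (B i) (ltB V E c m i) \<and>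
    (\<forall>w\<in>B i. \<forall>w'\<in>B i. (\<not> ltB V E c m i w w' \<and> \<not> ltB V E c m i w' w) \<longleftrightarrow> nbhd E w = nbhd E w')"
  by (rule strict_po_on_by_traces[OF edge_sym ltB_def B_left_traces_nested B_right_traces_nested
        B_traces_cross B_separating])

end

theorem proposition3p7:
  fixes V :: "'a set" and E :: "'a \<Rightarrow> 'a \<Rightarrow> bool" and c :: "nat \<Rightarrow> 'a" and m :: nat
  assumes "simple_graph V E" and "connected_graph V E" and "almost_bip_perm V E"
    and "shortest_hole V E c m"
  shows "\<forall>i::int. 0 \<le> i \<and> i < int m \<longrightarrow>
     (strict_po_on (Aset V E c m i) (ltA V E c m i) \<and>
      (\<forall>u \<in> Aset V E c m i. \<forall>u' \<in> Aset V E c m i.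
         (\<not> ltA V E c m i u u' \<and> \<not> ltA V E c m i u' u) \<longleftrightarrow> nbhd E u = nbhd E u')) \<and>
     (strict_po_on (Bset V E c m i) (ltB V E c m i) \<and>
      (\<forall>w \<in> Bset V E c m i. \<forall>w' \<in> Bset V E c m i.
         (\<not> ltB V E c m i w w' \<and> \<not> ltB V E c m i w' w) \<longleftrightarrow> nbhd E w = nbhd E w'))"
proof -
  interpret abpg_shortest_hole V E c m
    using assms(1,3,4) by unfold_locales
  show ?thesis using A_order B_order by blast
qed

end
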